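(* For every input permutation, at every step of algorithm $\mathcal{D}^2\mathcal{I}$ we have $Top(D_2)<Top(I)$ (a statement about an empty stack being considered true).
   Context: The $\mathfrak{D}^2\mathfrak{I}$ machine consists of two decreasing stacks $D_1,D_2$ followed in series by an increasing stack $I$. Elements of $D_1,D_2$ must be in decreasing order from top to bottom (top largest); elements of $I$ in increasing order from top to bottom (top smallest). Operations: $d_0$ pushes the next input element (called $Input$) into $D_1$; $d_1$ moves $Top(D_1)$ to $D_2$; $d_2$ moves $Top(D_2)$ to $I$; $d_3$ pops $Top(I)$ and appends it to the output. Any comparison involving an empty stack is considered true. Conditions: ($\alpha$) $Top(D_2)<Top(I)$; ($\beta$) $Top(D_2)<Top(D_1)$ and $Top(D_1)<Top(I)$; ($\gamma$) $Top(D_1)<Input$, $Input<Top(I)$, and the sequence of input elements from $Input$ up to the first input element larger than $Top(D_2)$ is increasing. Algorithm $\mathcal{D}^2\mathcal{I}$ repeatedly executes the first applicable instruction among: 1. if $Top(I)$ is the next element to be output (the smallest element not yet output), perform $d_3$; 2. if the elements contained in $D_1\cup D_2$ are exactly the next elements to be output, move them to the output in increasing order; 3. perform $d_1$ if it is legal and ($\beta$) holds; 4. perform $d_0$ if it is legal and ($\gamma$) holds; 5. perform $d_2$ if it is legal and ($\alpha$) holds; 6. otherwise perform $d_3$. *)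

theory Defs
  imports Main
begin

text \<open>State of the D^2 I machine: (remaining input, D1, D2, I, output).
  Stacks are lists whose head is the top. Elements are naturals; the input
  is a permutation of {1..n}.\<close>

type_synonym d2i_state = "nat list \<times> nat list \<times> nat list \<times> nat list \<times> nat list"

definition top_less :: "nat list \<Rightarrow> nat list \<Rightarrow> bool" where
  "top_less a b = (case a of [] \<Rightarrow> True | x # _ \<Rightarrow> (case b of [] \<Rightarrow> True | y # _ \<Rightarrow> x < y))"

definition remaining :: "nat \<Rightarrow> nat list \<Rightarrow> nat set" where
  "remaining n out = {1..n} - set out"

definition next_out :: "nat \<Rightarrow> nat list \<Rightarrow> nat" where
  "next_out n out = Min (remaining n out)"

text \<open>The elements of D1 \<union> D2 are exactly the next |D1 \<union> D2| elements to be output.\<close>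
definition are_next :: "nat \<Rightarrow> nat list \<Rightarrow> nat set \<Rightarrow> bool" where
  "are_next n out S = (S = {x \<in> remaining n out. card {y \<in> remaining n out. y < x} < card S})"

text \<open>Input elements from Input up to (and including) the first input element larger than Top(D2).
  If D2 is empty this is just [Input]; if no such element exists it is the whole remaining input.\<close>
definition gamma_seg :: "nat list \<Rightarrow> nat list \<Rightarrow> nat list" where
  "gamma_seg inp d2 = (case d2 of [] \<Rightarrow> take 1 inp
     | t # _ \<Rightarrow> takeWhile (\<lambda>x. \<not> t < x) inp @ take 1 (dropWhile (\<lambda>x. \<not> t < x) inp))"

text \<open>One step of algorithm D^2 I (first applicable instruction). None = the algorithm stops
  (rule 6 would have to pop an empty stack I, i.e. nothing is left to do or the machine is stuck).\<close>
definition d2i_step :: "nat \<Rightarrow> d2i_state \<Rightarrow> d2i_state option" where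
  "d2i_step n s = (case s of (inp, d1, d2, i, out) \<Rightarrow>
     if i \<noteq> [] \<and> hd i = next_out n out
       then Some (inp, d1, d2, tl i, out @ [hd i])
     else if set d1 \<union> set d2 \<noteq> {} \<and> are_next n out (set d1 \<union> set d2)
       then Some (inp, [], [], i, out @ sort (d1 @ d2))
     else if d1 \<noteq> [] \<and> top_less d2 d1 \<and> top_less d1 i
       then Some (inp, tl d1, hd d1 # d2, i, out)
     else if inp \<noteq> [] \<and> top_less d1 [hd inp] \<and> top_less [hd inp] i
             \<and> sorted_wrt (<) (gamma_seg inp d2)
       then Some (tl inp, hd inp # d1, d2, i, out)
     else if d2 \<noteq> [] \<and> top_less d2 i
       then Some (inp, d1, tl d2, hd d2 # i, out)
     else if i \<noteq> [] then Some (inp, d1, d2, tl i, out @ [hd i])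
     else None)"

fun d2i_run :: "nat list \<Rightarrow> nat \<Rightarrow> d2i_state option" where
  "d2i_run p 0 = Some (p, [], [], [], [])"
| "d2i_run p (Suc k) = Option.bind (d2i_run p k) (d2i_step (length p))"

end

theory Submission
  imports Defs
begin

text \<open>The conditions ``D2 decreasing'', ``I increasing'' and \<open>Top(D2) < Top(I)\<close> are
  jointly invariant under every move of the algorithm. Rule 3 moves \<open>Top(D1)\<close> onto \<open>D2\<close>
  only when it lies strictly between \<open>Top(D2)\<close> and \<open>Top(I)\<close> (condition \<open>\<beta>\<close>); rule 5 moves
  \<open>Top(D2)\<close> onto \<open>I\<close> only when it is below \<open>Top(I)\<close> (condition \<open>\<alpha>\<close>), and the element it
  uncovers on \<open>D2\<close> is smaller still; popping \<open>I\<close> can only raise \<open>Top(I)\<close>; rule 2 empties \<open>D2\<close>.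
  No property of the input is needed.\<close>

definition d2i_inv :: "d2i_state \<Rightarrow> bool" where
  "d2i_inv s = (case s of (inp, d1, d2, i, out) \<Rightarrow>
     sorted_wrt (>) d2 \<and> sorted_wrt (<) i \<and> top_less d2 i)"

lemma top_less_tl_right:
  assumes "sorted_wrt (<) i" and "top_less d i"
  shows "top_less d (tl i)"
  using assms by (cases i; cases "tl i"; cases d) (auto simp: top_less_def)

lemma top_less_push_below:
  assumes "sorted_wrt (>) (x # d)" and "top_less [x] i"
  shows "top_less d (x # i)"
  using assms by (cases d) (auto simp: top_less_def)

lemma d2i_step_preserves_inv:
  assumes inv: "d2i_inv s" and step: "d2i_step n s = Some s'"
  shows "d2i_inv s'"
proof -
  obtain inp d1 d2 i out where s: "s = (inp, d1, d2, i, out)"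
    by (cases s) auto
  have d2: "sorted_wrt (>) d2" and i: "sorted_wrt (<) i" and top: "top_less d2 i"
    using inv by (auto simp: d2i_inv_def s)
  have pop_i: "d2i_inv (inp, d1, d2, tl i, out')" for out'
    using d2 i top top_less_tl_right[OF i top] by (cases i) (auto simp: d2i_inv_def)
  have flush: "d2i_inv (inp, [], [], i, out')" for out'
    using i by (simp add: d2i_inv_def top_less_def)
  have d1_to_d2: "d2i_inv (inp, tl d1, hd d1 # d2, i, out)"
    if "d1 \<noteq> []" "top_less d2 d1" "top_less d1 i"
    using that d2 i by (cases d1; cases d2; cases i) (auto simp: d2i_inv_def top_less_def)
  have push_d1: "d2i_inv (inp', d1', d2, i, out)" for inp' d1'
    using d2 i top by (simp add: d2i_inv_def)
  have d2_to_i: "d2i_inv (inp, d1, tl d2, hd d2 # i, out)"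
    if "d2 \<noteq> []" "top_less d2 i"
  proof -
    from \<open>d2 \<noteq> []\<close> obtain x d where "d2 = x # d" by (cases d2) auto
    with that d2 i have "sorted_wrt (<) (x # i)" "top_less d (x # i)"
      using top_less_push_below[of x d i]
      by (auto simp: top_less_def split: list.splits)
    with d2 \<open>d2 = x # d\<close> show ?thesis by (simp add: d2i_inv_def)
  qed
  show ?thesis
    using step pop_i flush d1_to_d2 push_d1 d2_to_i
    unfolding d2i_step_def s by (auto split: if_splits)
qed

lemma d2i_run_inv: "d2i_run p k = Some s \<Longrightarrow> d2i_inv s"
proof (induction k arbitrary: s)
  case 0
  then show ?case by (auto simp: d2i_inv_def top_less_def)
next
  case (Suc k)
  then obtain t where "d2i_run p k = Some t" and "d2i_step (length p) t = Some s"
    by (cases "d2i_run p k") auto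
  then show ?case using Suc.IH d2i_step_preserves_inv by blast
qed

theorem mainTheorem5:
  fixes p :: "nat list" and k :: nat
    and inp d1 d2 i out :: "nat list"
  assumes "distinct p" and "set p = {1..length p}"
    and "d2i_run p k = Some (inp, d1, d2, i, out)"
  shows "top_less d2 i"
  using d2i_run_inv[OF assms(3)] by (simp add: d2i_inv_def)

end
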